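(* Let $(G,t)$ be an infinite biosphere. For every vertex $v\in G$ there exists an $\mathrm{IAP}\cap\mathrm{CONV}\cap\mathrm{CA}\cap\mathrm{REF}$-maximal set containing $v$; that is, a nonempty set $S$ of vertices of $G$ with $v\in S$ and $S\in \mathrm{IAP}\cap\mathrm{CONV}\cap\mathrm{CA}\cap\mathrm{REF}$, such that no proper superset of $S$ belongs to $\mathrm{IAP}\cap\mathrm{CONV}\cap\mathrm{CA}\cap\mathrm{REF}$.
   Context: An infinite biosphere is a directed graph $G$ together with a function $t$ assigning a real number $t(v)$ to each vertex, such that: (1) if $v$ is a parent of $w$ (edge from $v$ to $w$) then $t(v)<t(w)$; (2) for every $r\in\mathbb R$ at most finitely many vertices $v$ have $t(v)<r$; (3) every vertex has finitely many children; (4) $G$ is infinite. $v$ is an ancestor of $w$ (and $w$ a descendant of $v$) if there is a directed path $v=v_1,\dots,v_n=w$ with $n>1$. A $G$-subset is a set of vertices. $\mathrm{IAP}$: $G$-subsets $S$ such that no $v\in S$ has both infinitely many descendants in $S$ and infinitely many non-descendants in $S$. $\mathrm{CONV}$: $G$-subsets $S$ such that every $v\in G$ having an ancestor in $S$ and a descendant in $S$ lies in $S$. $\mathrm{CA}$: $G$-subsets $S$ for which there exists $v\in S$ such that every $w\in S$ with $w\neq v$ is a descendant of $v$. $\mathrm{REF}$: $G$-subsets $S$ such that every $v\in S$ with infinitely many descendants in $G$ has infinitely many descendants in $S$. *)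

theory Defs
  imports Complex_Main
begin

text \<open>A directed graph on vertex type 'v is given by its edge relation E
(E v w: there is an edge from v to w, i.e. v is a parent of w).
The vertex set of the graph is UNIV :: 'v set.\<close>

definition infinite_biosphere :: "('v \<Rightarrow> 'v \<Rightarrow> bool) \<Rightarrow> ('v \<Rightarrow> real) \<Rightarrow> bool" where
  "infinite_biosphere E t \<longleftrightarrow>
     (\<forall>v w. E v w \<longrightarrow> t v < t w) \<and>
     (\<forall>r::real. finite {v. t v < r}) \<and>
     (\<forall>v. finite {w. E v w}) \<and>
     infinite (UNIV :: 'v set)"

definition is_desc :: "('v \<Rightarrow> 'v \<Rightarrow> bool) \<Rightarrow> 'v \<Rightarrow> 'v \<Rightarrow> bool" where
  "is_desc E v w \<longleftrightarrow> (v, w) \<in> {(a, b). E a b}\<^sup>+"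

definition IAP :: "('v \<Rightarrow> 'v \<Rightarrow> bool) \<Rightarrow> 'v set \<Rightarrow> bool" where
  "IAP E S \<longleftrightarrow> \<not> (\<exists>v\<in>S. infinite {w\<in>S. is_desc E v w} \<and> infinite {w\<in>S. \<not> is_desc E v w})"

definition CONV :: "('v \<Rightarrow> 'v \<Rightarrow> bool) \<Rightarrow> 'v set \<Rightarrow> bool" where
  "CONV E S \<longleftrightarrow> (\<forall>v. (\<exists>a\<in>S. is_desc E a v) \<and> (\<exists>d\<in>S. is_desc E v d) \<longrightarrow> v \<in> S)"

definition CA :: "('v \<Rightarrow> 'v \<Rightarrow> bool) \<Rightarrow> 'v set \<Rightarrow> bool" where
  "CA E S \<longleftrightarrow> (\<exists>v\<in>S. \<forall>w\<in>S. w \<noteq> v \<longrightarrow> is_desc E v w)"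

definition REF :: "('v \<Rightarrow> 'v \<Rightarrow> bool) \<Rightarrow> 'v set \<Rightarrow> bool" where
  "REF E S \<longleftrightarrow> (\<forall>v\<in>S. infinite {w. is_desc E v w} \<longrightarrow> infinite {w\<in>S. is_desc E v w})"

definition good :: "('v \<Rightarrow> 'v \<Rightarrow> bool) \<Rightarrow> 'v set \<Rightarrow> bool" where
  "good E S \<longleftrightarrow> IAP E S \<and> CONV E S \<and> CA E S \<and> REF E S"

end

theory Submission
  imports Defs
begin

text \<open>
  Good sets containing \<open>v\<close> exist: if \<open>v\<close> has finitely many descendants, \<open>v\<close> together with them
  will do. Otherwise Koenig's lemma gives a ray from \<open>v\<close>, and the vertices between \<open>v\<close> and a
  ray form a convex set rooted at \<open>v\<close> in which every vertex has infinitely many descendants.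
  Zorn's lemma gives a minimal such set (a chain of them has a lower bound spanned by a ray
  running inside all its members, which exists since children sets are finite). A minimal one
  is good: infinitely many non-descendants of some \<open>x\<close> would carry a ray avoiding the
  descendants of \<open>x\<close>, spanning a smaller set.

  Good sets containing \<open>v\<close> are closed under unions of nonempty chains, so Zorn's lemma yields
  a maximal one. The union is rooted at the earliest of the roots of its members. It stays in
  IAP: if \<open>x\<close> lies in a member \<open>S\<close> containing that root, a non-descendant of \<open>x\<close> outside \<open>S\<close> is
  reached from the root by leaving \<open>S\<close> along an edge \<open>p \<rightarrow> b\<close>, where \<open>p\<close> is one of the finitely
  many non-descendants of \<open>x\<close> in \<open>S\<close>, and \<open>b\<close> has only finitely many descendants, as otherwise
  convexity of \<open>S\<close> would force \<open>b \<in> S\<close>.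
\<close>

lemma is_desc_trans: "is_desc E a b \<Longrightarrow> is_desc E b c \<Longrightarrow> is_desc E a c"
  unfolding is_desc_def by (rule trancl_trans)

lemma is_desc_if_edge: "E a b \<Longrightarrow> is_desc E a b"
  unfolding is_desc_def by auto

lemma is_desc_first_edge:
  assumes "is_desc E a b"
  obtains c where "E a c" "c = b \<or> is_desc E c b"
  using assms unfolding is_desc_def by (blast elim: converse_tranclE)

lemma is_desc_exit_edge:
  assumes "is_desc E a y" "a \<in> S" "y \<notin> S"
  obtains p b
  where "p \<in> S" "b \<notin> S" "E p b" "p = a \<or> is_desc E a p" "b = y \<or> is_desc E b y"
proof -
  have "\<exists>p b. p \<in> S \<and> b \<notin> S \<and> E p b \<and> (p = a \<or> is_desc E a p) \<and> (b = y \<or> is_desc E b y)"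
    using assms(1,3) unfolding is_desc_def
  proof (induction rule: trancl_induct)
    case (base y)
    then show ?case using assms(2) by blast
  next
    case (step y z)
    show ?case
    proof (cases "y \<in> S")
      case True
      then show ?thesis using step by blast
    next
      case False
      then obtain p b where "p \<in> S" "b \<notin> S" "E p b" "p = a \<or> (a, p) \<in> {(a, b). E a b}\<^sup>+"
        and "b = y \<or> (b, y) \<in> {(a, b). E a b}\<^sup>+"
        using step.IH by blast
      moreover have "(b, z) \<in> {(a, b). E a b}\<^sup>+"
        using \<open>b = y \<or> (b, y) \<in> {(a, b). E a b}\<^sup>+\<close> step.hyps(2)
        by (auto intro: trancl_into_trancl r_into_trancl)
      ultimately show ?thesis by blast
    qed
  qed
  then show ?thesis using that by blast
qed

definition rooted_at :: "('v \<Rightarrow> 'v \<Rightarrow> bool) \<Rightarrow> 'v \<Rightarrow> 'v set \<Rightarrow> bool" where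
  "rooted_at E r S \<longleftrightarrow> r \<in> S \<and> (\<forall>w\<in>S. w \<noteq> r \<longrightarrow> is_desc E r w)"

lemma CA_iff_rooted_at: "CA E S \<longleftrightarrow> (\<exists>r. rooted_at E r S)"
  unfolding CA_def rooted_at_def by blast

definition ray :: "('v \<Rightarrow> 'v \<Rightarrow> bool) \<Rightarrow> (nat \<Rightarrow> 'v) \<Rightarrow> bool" where
  "ray E r \<longleftrightarrow> (\<forall>k. E (r k) (r (Suc k)))"

lemma ray_is_desc:
  assumes "ray E r" "k < m"
  shows "is_desc E (r k) (r m)"
  using assms(2)
proof (induction m)
  case (Suc m)
  then show ?case
    using assms(1) unfolding ray_def by (metis is_desc_if_edge is_desc_trans less_Suc_eq)
qed simp

lemma ray_exists:
  assumes "P v" "\<And>y. P y \<Longrightarrow> \<exists>c. E y c \<and> P c"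
  shows "\<exists>r. r 0 = v \<and> ray E r \<and> (\<forall>k. P (r k))"
proof -
  obtain r where "\<forall>k. (P (r k) \<and> (k = 0 \<longrightarrow> r k = v)) \<and> E (r k) (r (Suc k))"
    using dependent_nat_choice[where P = "\<lambda>k y. P y \<and> (k = 0 \<longrightarrow> y = v)" and Q = "\<lambda>_. E"]
      assms by blast
  then show ?thesis unfolding ray_def by blast
qed

definition ray_hull :: "('v \<Rightarrow> 'v \<Rightarrow> bool) \<Rightarrow> 'v \<Rightarrow> (nat \<Rightarrow> 'v) \<Rightarrow> 'v set" where
  "ray_hull E v r = {y. (y = v \<or> is_desc E v y) \<and> (\<exists>k. y = r k \<or> is_desc E y (r k))}"

lemma ray_hull_subset:
  assumes "CONV E S" "v \<in> S" "range r \<subseteq> S"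
  shows "ray_hull E v r \<subseteq> S"
  using assms unfolding ray_hull_def CONV_def by blast

lemma Inter_chain_finite_nonempty:
  assumes "chain\<^sub>\<subseteq> \<C>" "\<C> \<noteq> {}" "\<And>S. S \<in> \<C> \<Longrightarrow> finite S \<and> S \<noteq> {}"
  shows "\<Inter>\<C> \<noteq> {}"
proof -
  obtain S0 where S0: "S0 \<in> \<C>" "\<And>S. S \<in> \<C> \<Longrightarrow> card S0 \<le> card S"
    using assms(2) ex_has_least_nat[of "\<lambda>S. S \<in> \<C>" _ card] by blast
  have "S0 \<subseteq> S" if "S \<in> \<C>" for S
  proof -
    have "S0 \<subseteq> S \<or> S \<subseteq> S0" using assms(1) S0(1) that unfolding chain_subset_def by blast
    moreover have "S = S0" if "S \<subseteq> S0"
      using card_seteq[OF _ that S0(2)] assms(3) S0(1) \<open>S \<in> \<C>\<close> by blast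
    ultimately show ?thesis by blast
  qed
  then show ?thesis using assms(3) S0(1) by blast
qed

lemma subset_Zorn_minimal:
  assumes "\<A> \<noteq> {}"
    and lower_bound: "\<And>\<C>. \<C> \<noteq> {} \<Longrightarrow> \<C> \<subseteq> \<A> \<Longrightarrow> chain\<^sub>\<subseteq> \<C> \<Longrightarrow> \<exists>L\<in>\<A>. \<forall>S\<in>\<C>. L \<subseteq> S"
  shows "\<exists>M\<in>\<A>. \<forall>X\<in>\<A>. X \<subseteq> M \<longrightarrow> X = M"
proof -
  have "\<exists>N\<in>uminus ` \<A>. \<forall>X\<in>uminus ` \<A>. N \<subseteq> X \<longrightarrow> X = N"
  proof (rule subset_Zorn)
    fix \<C> assume "subset.chain (uminus ` \<A>) \<C>"
    then have "uminus ` \<C> \<subseteq> \<A>" "chain\<^sub>\<subseteq> (uminus ` \<C>)"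
      unfolding subset_chain_def chain_subset_def by auto
    show "\<exists>U\<in>uminus ` \<A>. \<forall>X\<in>\<C>. X \<subseteq> U"
    proof (cases "\<C> = {}")
      case True
      then show ?thesis using assms(1) by blast
    next
      case False
      then have "uminus ` \<C> \<noteq> {}" by blast
      then obtain L where "L \<in> \<A>" "\<forall>S\<in>uminus ` \<C>. L \<subseteq> S"
        using lower_bound \<open>uminus ` \<C> \<subseteq> \<A>\<close> \<open>chain\<^sub>\<subseteq> (uminus ` \<C>)\<close> by meson
      then show ?thesis by (intro bexI[of _ "- L"]) auto
    qed
  qed
  then obtain M where "M \<in> \<A>" and maximal: "\<forall>X\<in>uminus ` \<A>. - M \<subseteq> X \<longrightarrow> X = - M"
    by blast
  have "X = M" if "X \<in> \<A>" "X \<subseteq> M" for X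
    using maximal that by (metis Compl_subset_Compl_iff double_compl image_eqI)
  then show ?thesis using \<open>M \<in> \<A>\<close> by blast
qed

lemma good_insert_descendants:
  assumes "finite {w. is_desc E v w}"
  shows "good E (insert v {w. is_desc E v w})"
proof -
  let ?S = "insert v {w. is_desc E v w}"
  have finite_desc: "finite {w. is_desc E x w}" if "x \<in> ?S" for x
  proof (rule rev_finite_subset[OF assms])
    show "{w. is_desc E x w} \<subseteq> {w. is_desc E v w}"
      using that is_desc_trans[of E v x] by blast
  qed
  have "finite {w\<in>?S. is_desc E x w}" if "x \<in> ?S" for x
    using finite_desc[OF that] by (rule rev_finite_subset) blast
  then have "IAP E ?S" unfolding IAP_def by blast
  moreover have "CONV E ?S" unfolding CONV_def by (blast intro: is_desc_trans)
  moreover have "CA E ?S" unfolding CA_def by blast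
  moreover have "REF E ?S" unfolding REF_def using finite_desc by blast
  ultimately show ?thesis unfolding good_def by blast
qed

lemma REF_Union:
  assumes "\<And>S. S \<in> \<C> \<Longrightarrow> REF E S"
  shows "REF E (\<Union>\<C>)"
  unfolding REF_def
proof (intro ballI impI)
  fix x assume "x \<in> \<Union>\<C>" "infinite {w. is_desc E x w}"
  then obtain S where "S \<in> \<C>" "infinite {w\<in>S. is_desc E x w}"
    using assms unfolding REF_def by blast
  moreover have "{w\<in>S. is_desc E x w} \<subseteq> {w\<in>\<Union>\<C>. is_desc E x w}"
    using \<open>S \<in> \<C>\<close> by blast
  ultimately show "infinite {w\<in>\<Union>\<C>. is_desc E x w}"
    using infinite_super by blast
qed

lemma CONV_Union_chain:
  assumes "chain\<^sub>\<subseteq> \<C>" "\<And>S. S \<in> \<C> \<Longrightarrow> CONV E S"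
  shows "CONV E (\<Union>\<C>)"
  unfolding CONV_def
proof (intro allI impI)
  fix y assume "(\<exists>a\<in>\<Union>\<C>. is_desc E a y) \<and> (\<exists>d\<in>\<Union>\<C>. is_desc E y d)"
  then obtain a d S T where "S \<in> \<C>" "a \<in> S" "is_desc E a y" "T \<in> \<C>" "d \<in> T" "is_desc E y d"
    by blast
  moreover have "S \<subseteq> T \<or> T \<subseteq> S" using assms(1) \<open>S \<in> \<C>\<close> \<open>T \<in> \<C>\<close>
    unfolding chain_subset_def by blast
  ultimately show "y \<in> \<Union>\<C>" using assms(2) unfolding CONV_def by blast
qed

lemma finite_descendants_outside:
  assumes "S \<subseteq> T" "infinite S" "CONV E S" "IAP E T" "REF E T"
    and "a \<in> S" "is_desc E a y" "y \<in> T - S"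
  shows "finite {w. is_desc E y w}"
proof (rule ccontr)
  assume "infinite {w. is_desc E y w}"
  then have "infinite {w\<in>T. is_desc E y w}" using assms(5,8) unfolding REF_def by blast
  then have "finite {w\<in>T. \<not> is_desc E y w}" using assms(4,8) unfolding IAP_def by blast
  then have "\<not> S \<subseteq> {w\<in>T. \<not> is_desc E y w}" using assms(2) finite_subset by blast
  then obtain z where "z \<in> S" "is_desc E y z" using assms(1) by blast
  then have "y \<in> S" using assms(3,6,7) unfolding CONV_def by blast
  then show False using assms(8) by blast
qed

lemma non_descendants_outside_via_exit_edges:
  assumes "CONV E U" "S \<subseteq> U" "rooted_at E r U" "r \<in> S"
  shows "{w\<in>U. \<not> is_desc E x w} - S \<subseteq>
    (\<Union>p\<in>{w\<in>S. \<not> is_desc E x w}. \<Union>b\<in>{b\<in>U - S. E p b}. insert b {w. is_desc E b w})"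
proof
  fix y assume y: "y \<in> {w\<in>U. \<not> is_desc E x w} - S"
  then have "y \<notin> S" by blast
  have "is_desc E r y" using y assms(3,4) unfolding rooted_at_def by auto
  then obtain p b where pb: "p \<in> S" "b \<notin> S" "E p b" "p = r \<or> is_desc E r p"
    and b: "b = y \<or> is_desc E b y"
    by (rule is_desc_exit_edge[OF _ assms(4) \<open>y \<notin> S\<close>])
  have "is_desc E p b" using pb(3) by (rule is_desc_if_edge)
  then have "is_desc E p y" using b is_desc_trans[of E p b y] by blast
  then have "\<not> is_desc E x p" using y is_desc_trans[of E x p y] by blast
  have "is_desc E r b" using pb(4) \<open>is_desc E p b\<close> is_desc_trans[of E r p b] by blast
  moreover have "r \<in> U" using assms(3) unfolding rooted_at_def by blast
  ultimately have "b \<in> U" using assms(1) b y unfolding CONV_def by blast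
  then show "y \<in> (\<Union>p\<in>{w\<in>S. \<not> is_desc E x w}. \<Union>b\<in>{b\<in>U - S. E p b}. insert b {w. is_desc E b w})"
    using pb \<open>\<not> is_desc E x p\<close> b by blast
qed

lemma rooted_at_Union_chain:
  assumes "chain\<^sub>\<subseteq> \<C>" "S0 \<in> \<C>" "rooted_at E r S0"
    and root_above: "\<forall>S\<in>\<C>. S0 \<subseteq> S \<longrightarrow> rooted_at E r S"
  shows "rooted_at E r (\<Union>\<C>)"
  unfolding rooted_at_def
proof (intro conjI ballI impI)
  show "r \<in> \<Union>\<C>" using assms(2,3) unfolding rooted_at_def by auto
  fix w assume "w \<in> \<Union>\<C>" "w \<noteq> r"
  then obtain S where "S \<in> \<C>" "w \<in> S" by blast
  moreover have "S \<subseteq> S0 \<or> S0 \<subseteq> S"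
    using assms(1,2) \<open>S \<in> \<C>\<close> unfolding chain_subset_def by blast
  ultimately have "w \<in> S0 \<or> rooted_at E r S"
    using root_above by blast
  then show "is_desc E r w" using assms(3) \<open>w \<in> S\<close> \<open>w \<noteq> r\<close> unfolding rooted_at_def by auto
qed

definition infinite_branch :: "('v \<Rightarrow> 'v \<Rightarrow> bool) \<Rightarrow> 'v \<Rightarrow> 'v set \<Rightarrow> bool" where
  "infinite_branch E v S \<longleftrightarrow>
     rooted_at E v S \<and> CONV E S \<and> (\<forall>x\<in>S. infinite {w\<in>S. is_desc E x w})"

locale biosphere =
  fixes E :: "'v \<Rightarrow> 'v \<Rightarrow> bool" and t :: "'v \<Rightarrow> real"
  assumes time_increasing: "E v w \<Longrightarrow> t v < t w"
    and finite_before: "finite {v. t v < r}"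
    and finite_children: "finite {w. E v w}"

lemma biosphere_if_infinite_biosphere: "infinite_biosphere E t \<Longrightarrow> biosphere E t"
  unfolding infinite_biosphere_def biosphere_def by blast

context biosphere
begin

lemma is_desc_time: "is_desc E a b \<Longrightarrow> t a < t b"
  unfolding is_desc_def
proof (induction rule: trancl_induct)
  case (base b)
  then show ?case by (simp add: time_increasing)
next
  case (step b c)
  then show ?case using time_increasing[of b c] by simp
qed

lemma not_is_desc_self: "\<not> is_desc E a a"
  using is_desc_time less_irrefl by blast

lemma finite_ancestors: "finite {a. is_desc E a b}"
  using finite_before[of "t b"] by (rule rev_finite_subset) (auto dest: is_desc_time)

lemma inj_ray: "ray E r \<Longrightarrow> inj r"
  by (rule linorder_injI) (metis ray_is_desc not_is_desc_self)

lemma infinite_branch_ray_hull: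
  assumes "ray E r" "r 0 = v"
  shows "infinite_branch E v (ray_hull E v r)"
proof -
  let ?H = "ray_hull E v r"
  have on_ray: "r k \<in> ?H" for k
    using ray_is_desc[OF assms(1), of 0 k] assms(2) unfolding ray_hull_def by (cases k) auto
  have "rooted_at E v ?H"
    using on_ray[of 0] assms(2) unfolding rooted_at_def ray_hull_def by auto
  moreover have "CONV E ?H"
    unfolding CONV_def ray_hull_def by (blast intro: is_desc_trans)
  moreover have "infinite {w\<in>?H. is_desc E x w}" if x: "x \<in> ?H" for x
  proof -
    obtain k where "x = r k \<or> is_desc E x (r k)"
      using x unfolding ray_hull_def by blast
    then have "r ` {k<..} \<subseteq> {w\<in>?H. is_desc E x w}"
      using on_ray ray_is_desc[OF assms(1), of k] is_desc_trans[of E x "r k"] by auto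
    moreover have "infinite (r ` {k<..})"
      using inj_ray[OF assms(1)] by (simp add: finite_image_iff inj_on_subset infinite_Ioi)
    ultimately show ?thesis by (rule infinite_super)
  qed
  ultimately show ?thesis unfolding infinite_branch_def by blast
qed

lemma child_with_infinitely_many_descendants:
  assumes "infinite {w\<in>N. is_desc E y w}"
    and "\<And>c w. E y c \<Longrightarrow> is_desc E c w \<Longrightarrow> w \<in> N \<Longrightarrow> c \<in> N"
  obtains c where "c \<in> N" "E y c" "infinite {w\<in>N. is_desc E c w}"
proof -
  have "{w\<in>N. is_desc E y w} \<subseteq> (\<Union>c\<in>{c. E y c}. insert c {w\<in>N. is_desc E c w})"
    by (blast elim: is_desc_first_edge)
  then have "infinite (\<Union>c\<in>{c. E y c}. insert c {w\<in>N. is_desc E c w})"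
    using assms(1) by (rule infinite_super)
  then obtain c where "E y c" "infinite {w\<in>N. is_desc E c w}"
    using finite_children[of y] by auto
  moreover from this obtain w where "w \<in> N" "is_desc E c w"
    using not_finite_existsD by blast
  ultimately show thesis using that assms(2) by blast
qed

lemma ray_within:
  assumes "v \<in> N" "infinite {w\<in>N. is_desc E v w}"
    and closed: "\<And>y c w. y \<in> N \<Longrightarrow> E y c \<Longrightarrow> is_desc E c w \<Longrightarrow> w \<in> N \<Longrightarrow> c \<in> N"
  shows "\<exists>r. r 0 = v \<and> ray E r \<and> range r \<subseteq> N"
proof -
  let ?P = "\<lambda>y. y \<in> N \<and> infinite {w\<in>N. is_desc E y w}"
  have step: "\<exists>c. E y c \<and> ?P c" if "?P y" for y
  proof -
    from that have "y \<in> N" "infinite {w\<in>N. is_desc E y w}" by blast+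
    obtain c where "c \<in> N" "E y c" "infinite {w\<in>N. is_desc E c w}"
    proof (rule child_with_infinitely_many_descendants[OF \<open>infinite {w\<in>N. is_desc E y w}\<close>])
      show "c \<in> N" if "E y c" "is_desc E c w" "w \<in> N" for c w
        using closed[OF \<open>y \<in> N\<close> that] .
    qed
    then show ?thesis by blast
  qed
  have start: "?P v" using assms(1,2) by blast
  obtain r where "r 0 = v" "ray E r" "\<forall>k. ?P (r k)"
    using ray_exists[where P = ?P and E = E, OF start step] by blast
  then show ?thesis by blast
qed

lemma infinite_branch_exists:
  assumes "infinite {w. is_desc E v w}"
  obtains S where "infinite_branch E v S"
proof -
  have "\<exists>r. r 0 = v \<and> ray E r"
    using ray_within[of v UNIV] assms by simp
  then show thesis using that infinite_branch_ray_hull by blast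
qed

lemma infinite_branch_chain_lower_bound:
  assumes "\<C> \<noteq> {}" "chain\<^sub>\<subseteq> \<C>" "\<And>S. S \<in> \<C> \<Longrightarrow> infinite_branch E v S"
  shows "\<exists>L. infinite_branch E v L \<and> (\<forall>S\<in>\<C>. L \<subseteq> S)"
proof -
  have step: "\<exists>c. E y c \<and> c \<in> \<Inter>\<C>" if "y \<in> \<Inter>\<C>" for y
  proof -
    have "{c\<in>S. E y c} \<noteq> {}" if "S \<in> \<C>" for S
    proof -
      have "infinite {w\<in>S. is_desc E y w}" "CONV E S"
        using assms(3)[OF that] \<open>y \<in> \<Inter>\<C>\<close> that unfolding infinite_branch_def by auto
      moreover have "y \<in> S" using \<open>y \<in> \<Inter>\<C>\<close> that by blast
      ultimately obtain c where "c \<in> S" "E y c"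
        using child_with_infinitely_many_descendants[of S y] is_desc_if_edge
        unfolding CONV_def by metis
      then show ?thesis by blast
    qed
    moreover have "chain\<^sub>\<subseteq> ((\<lambda>S. {c\<in>S. E y c}) ` \<C>)"
      using assms(2) unfolding chain_subset_def by blast
    moreover have "finite {c\<in>S. E y c}" for S
      using finite_children[of y] by (rule rev_finite_subset) blast
    ultimately have "\<Inter>((\<lambda>S. {c\<in>S. E y c}) ` \<C>) \<noteq> {}"
      using Inter_chain_finite_nonempty[of "(\<lambda>S. {c\<in>S. E y c}) ` \<C>"] assms(1) by blast
    then obtain c where "c \<in> (\<Inter>S\<in>\<C>. {c\<in>S. E y c})" by blast
    then have "c \<in> \<Inter>\<C>" "E y c" using assms(1) by auto
    then show ?thesis by blast
  qed
  have start: "v \<in> \<Inter>\<C>"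
    using assms(3) by (auto simp: infinite_branch_def rooted_at_def)
  obtain r where r: "r 0 = v" "ray E r" "\<forall>k. r k \<in> \<Inter>\<C>"
    using ray_exists[where P = "\<lambda>y. y \<in> \<Inter>\<C>" and E = E, OF start step] by blast
  have "ray_hull E v r \<subseteq> S" if "S \<in> \<C>" for S
  proof (rule ray_hull_subset)
    show "CONV E S" using assms(3)[OF that] unfolding infinite_branch_def by blast
    show "v \<in> S" "range r \<subseteq> S" using start r(3) that by blast+
  qed
  then show ?thesis using infinite_branch_ray_hull[OF r(2,1)] by blast
qed

lemma finite_non_descendants_if_minimal:
  assumes M: "infinite_branch E v M"
    and minimal: "\<And>S. infinite_branch E v S \<Longrightarrow> S \<subseteq> M \<Longrightarrow> S = M"
    and "x \<in> M"
  shows "finite {w\<in>M. \<not> is_desc E x w}"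
proof (rule ccontr)
  define N where "N = {w\<in>M. \<not> is_desc E x w}"
  assume "infinite {w\<in>M. \<not> is_desc E x w}"
  then have "infinite N" by (simp add: N_def)
  have root: "v \<in> M" "\<And>w. w \<in> M \<Longrightarrow> w \<noteq> v \<Longrightarrow> is_desc E v w" and "CONV E M"
    using M unfolding infinite_branch_def rooted_at_def by auto
  have "\<not> is_desc E x v"
  proof (cases "x = v")
    case False
    then show ?thesis
      using root(2)[OF \<open>x \<in> M\<close>] is_desc_trans[of E v x v] not_is_desc_self by blast
  qed (simp add: not_is_desc_self)
  then have "v \<in> N" using root(1) by (simp add: N_def)
  have "N - {v} \<subseteq> {w\<in>N. is_desc E v w}" using root(2) by (auto simp: N_def)
  then have infinite_v: "infinite {w\<in>N. is_desc E v w}"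
    using \<open>infinite N\<close> by (meson infinite_remove infinite_super)
  have "\<exists>r. r 0 = v \<and> ray E r \<and> range r \<subseteq> N"
  proof (rule ray_within[OF \<open>v \<in> N\<close> infinite_v])
    show "c \<in> N" if "y \<in> N" "E y c" "is_desc E c w" "w \<in> N" for y c w
    proof -
      have "is_desc E y c" using that(2) by (rule is_desc_if_edge)
      then have "c \<in> M"
        using \<open>CONV E M\<close> that(1,3,4) unfolding N_def CONV_def by blast
      moreover have "\<not> is_desc E x c"
        using that(3,4) is_desc_trans[of E x c w] unfolding N_def by blast
      ultimately show ?thesis unfolding N_def by blast
    qed
  qed
  then obtain r where r: "r 0 = v" "ray E r" "range r \<subseteq> N" by blast
  have "ray_hull E v r \<subseteq> M"
    using ray_hull_subset[OF \<open>CONV E M\<close> root(1)] r(3) by (auto simp: N_def)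
  then have "ray_hull E v r = M"
    using minimal infinite_branch_ray_hull[OF r(2,1)] by blast
  then obtain k where "x = r k \<or> is_desc E x (r k)"
    using \<open>x \<in> M\<close> unfolding ray_hull_def by blast
  moreover have "is_desc E (r k) (r (Suc k))"
    using ray_is_desc[OF r(2), of k "Suc k"] by simp
  ultimately have "is_desc E x (r (Suc k))"
    using is_desc_trans[of E x "r k"] by blast
  then show False using r(3) by (auto simp: N_def)
qed

lemma good_if_minimal_infinite_branch:
  assumes "infinite_branch E v M" "\<And>S. infinite_branch E v S \<Longrightarrow> S \<subseteq> M \<Longrightarrow> S = M"
  shows "good E M"
proof -
  have "IAP E M"
    using finite_non_descendants_if_minimal[OF assms] unfolding IAP_def by blast
  moreover have "REF E M"
    using assms(1) unfolding infinite_branch_def REF_def by blast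
  ultimately show ?thesis
    using assms(1) CA_iff_rooted_at unfolding infinite_branch_def good_def by blast
qed

lemma good_exists: "\<exists>S. v \<in> S \<and> good E S"
proof (cases "finite {w. is_desc E v w}")
  case True
  then show ?thesis using good_insert_descendants[of E v] by blast
next
  case False
  let ?B = "{S. infinite_branch E v S}"
  have "\<exists>M\<in>?B. \<forall>X\<in>?B. X \<subseteq> M \<longrightarrow> X = M"
  proof (rule subset_Zorn_minimal)
    show "?B \<noteq> {}" using infinite_branch_exists[OF False] by blast
    show "\<exists>L\<in>?B. \<forall>S\<in>\<C>. L \<subseteq> S" if "\<C> \<noteq> {}" "\<C> \<subseteq> ?B" "chain\<^sub>\<subseteq> \<C>" for \<C>
    proof -
      have branches: "\<And>S. S \<in> \<C> \<Longrightarrow> infinite_branch E v S" using that(2) by blast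
      show ?thesis using infinite_branch_chain_lower_bound[OF that(1,3) branches] by blast
    qed
  qed
  then obtain M where "infinite_branch E v M" "\<And>S. infinite_branch E v S \<Longrightarrow> S \<subseteq> M \<Longrightarrow> S = M"
    by blast
  moreover from this(1) have "v \<in> M" unfolding infinite_branch_def rooted_at_def by simp
  ultimately show ?thesis using good_if_minimal_infinite_branch by blast
qed

lemma chain_roots_stabilize:
  assumes "\<C> \<noteq> {}" "\<And>S. S \<in> \<C> \<Longrightarrow> v \<in> S \<and> CA E S"
  shows "\<exists>S0\<in>\<C>. \<exists>r. rooted_at E r S0 \<and> (\<forall>S\<in>\<C>. S0 \<subseteq> S \<longrightarrow> rooted_at E r S)"
proof -
  let ?R = "{r. \<exists>S\<in>\<C>. rooted_at E r S}"
  have "?R \<subseteq> insert v {a. is_desc E a v}"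
    using assms(2) unfolding rooted_at_def by fastforce
  then have "finite ?R" by (rule finite_subset) (simp add: finite_ancestors)
  moreover have "?R \<noteq> {}"
  proof -
    obtain S where "S \<in> \<C>" using assms(1) by blast
    moreover obtain r where "rooted_at E r S"
      using assms(2)[OF \<open>S \<in> \<C>\<close>] unfolding CA_iff_rooted_at by blast
    ultimately show ?thesis by blast
  qed
  ultimately obtain r where "is_arg_min t (\<lambda>r. r \<in> ?R) r"
    using ex_is_arg_min_if_finite by blast
  then obtain S0 where S0: "S0 \<in> \<C>" "rooted_at E r S0"
    and least: "\<And>S r'. S \<in> \<C> \<Longrightarrow> rooted_at E r' S \<Longrightarrow> \<not> t r' < t r"
    unfolding is_arg_min_def by blast
  have "rooted_at E r S" if S: "S \<in> \<C>" "S0 \<subseteq> S" for S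
  proof -
    obtain r' where r': "rooted_at E r' S"
      using assms(2)[OF S(1)] unfolding CA_iff_rooted_at by blast
    have "r' = r"
    proof (rule ccontr)
      assume "r' \<noteq> r"
      moreover have "r \<in> S" using S0(2) S(2) unfolding rooted_at_def by blast
      ultimately have "is_desc E r' r" using r' unfolding rooted_at_def by auto
      then show False using least[OF S(1) r'] is_desc_time by blast
    qed
    with r' show ?thesis by simp
  qed
  with S0 show ?thesis by blast
qed

lemma finite_non_descendants_Union_chain:
  assumes "chain\<^sub>\<subseteq> \<C>" "\<And>S. S \<in> \<C> \<Longrightarrow> good E S"
    and "S \<in> \<C>" "infinite S" "r \<in> S" "rooted_at E r (\<Union>\<C>)"
    and finite_F: "finite {w\<in>S. \<not> is_desc E x w}"
  shows "finite {w\<in>\<Union>\<C>. \<not> is_desc E x w}"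
proof -
  let ?U = "\<Union>\<C>"
  have finite_desc: "finite {w. is_desc E b w}" if b: "b \<in> ?U - S" for b
  proof -
    obtain T where "T \<in> \<C>" "b \<in> T" using b by blast
    then have "S \<subseteq> T" using b assms(1,3) unfolding chain_subset_def by blast
    moreover have "is_desc E r b"
      using b assms(5,6) unfolding rooted_at_def by auto
    moreover have "IAP E T" "REF E T" using assms(2)[OF \<open>T \<in> \<C>\<close>] unfolding good_def by auto
    moreover have "CONV E S" using assms(2)[OF assms(3)] unfolding good_def by auto
    moreover have "b \<in> T - S" using \<open>b \<in> T\<close> b by blast
    ultimately show ?thesis
      using finite_descendants_outside[OF _ assms(4)] assms(5) by blast
  qed
  have "finite (\<Union>p\<in>{w\<in>S. \<not> is_desc E x w}. \<Union>b\<in>{b\<in>?U - S. E p b}. insert b {w. is_desc E b w})"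
  proof (intro finite_UN_I finite_F)
    show "finite {b\<in>?U - S. E p b}" for p
      using finite_children[of p] by (rule rev_finite_subset) blast
    show "finite (insert b {w. is_desc E b w})" if "b \<in> {b\<in>?U - S. E p b}" for p b
      using finite_desc that by simp
  qed
  moreover have "CONV E ?U"
    using CONV_Union_chain assms(1,2) unfolding good_def by blast
  ultimately have "finite ({w\<in>?U. \<not> is_desc E x w} - S)"
    using non_descendants_outside_via_exit_edges[of E ?U S r x] assms(3,5,6)
    by (meson Union_upper finite_subset)
  then have "finite (({w\<in>?U. \<not> is_desc E x w} - S) \<union> {w\<in>S. \<not> is_desc E x w})"
    using finite_F by blast
  moreover have "{w\<in>?U. \<not> is_desc E x w} \<subseteq> ({w\<in>?U. \<not> is_desc E x w} - S) \<union> {w\<in>S. \<not> is_desc E x w}"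
    by blast
  ultimately show ?thesis using finite_subset by blast
qed

lemma IAP_Union_chain:
  assumes "chain\<^sub>\<subseteq> \<C>" "\<And>S. S \<in> \<C> \<Longrightarrow> good E S"
    and "S0 \<in> \<C>" "r \<in> S0" "rooted_at E r (\<Union>\<C>)"
  shows "IAP E (\<Union>\<C>)"
  unfolding IAP_def
proof
  let ?U = "\<Union>\<C>"
  assume "\<exists>x\<in>?U. infinite {w\<in>?U. is_desc E x w} \<and> infinite {w\<in>?U. \<not> is_desc E x w}"
  then obtain x Sx where "Sx \<in> \<C>" "x \<in> Sx" "infinite {w\<in>?U. is_desc E x w}"
    and infinite_non_desc: "infinite {w\<in>?U. \<not> is_desc E x w}" by blast
  moreover have "Sx \<subseteq> S0 \<or> S0 \<subseteq> Sx"
    using assms(1,3) \<open>Sx \<in> \<C>\<close> unfolding chain_subset_def by blast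
  ultimately obtain S where S: "S \<in> \<C>" "x \<in> S" "S0 \<subseteq> S"
    using assms(3) by blast
  have good_S: "IAP E S" "REF E S" using assms(2)[OF S(1)] unfolding good_def by auto
  have "infinite {w. is_desc E x w}"
    using \<open>infinite {w\<in>?U. is_desc E x w}\<close> by (rule infinite_super[rotated]) blast
  then have "infinite {w\<in>S. is_desc E x w}"
    using good_S(2) S(2) unfolding REF_def by blast
  then have "finite {w\<in>S. \<not> is_desc E x w}"
    using good_S(1) S(2) unfolding IAP_def by blast
  moreover have "infinite S"
    using \<open>infinite {w\<in>S. is_desc E x w}\<close> by (rule infinite_super[rotated]) blast
  moreover have "r \<in> S" using assms(4) S(3) by blast
  ultimately have "finite {w\<in>?U. \<not> is_desc E x w}"
    using finite_non_descendants_Union_chain[OF assms(1,2) S(1)] assms(5) by blast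
  then show False using infinite_non_desc by blast
qed

lemma good_Union_chain:
  assumes "\<C> \<noteq> {}" "chain\<^sub>\<subseteq> \<C>" "\<And>S. S \<in> \<C> \<Longrightarrow> v \<in> S \<and> good E S"
  shows "good E (\<Union>\<C>)"
proof -
  have good: "\<And>S. S \<in> \<C> \<Longrightarrow> good E S" using assms(3) by blast
  have roots: "v \<in> S \<and> CA E S" if "S \<in> \<C>" for S
    using assms(3)[OF that] unfolding good_def by blast
  obtain S0 r where S0: "S0 \<in> \<C>" "rooted_at E r S0"
    and "\<forall>S\<in>\<C>. S0 \<subseteq> S \<longrightarrow> rooted_at E r S"
    using chain_roots_stabilize[OF assms(1) roots] by blast
  then have root: "rooted_at E r (\<Union>\<C>)" by (rule rooted_at_Union_chain[OF assms(2)])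
  have "r \<in> S0" using S0(2) unfolding rooted_at_def by simp
  then have "IAP E (\<Union>\<C>)" using IAP_Union_chain[OF assms(2) good S0(1)] root by blast
  moreover have "CONV E (\<Union>\<C>)" using CONV_Union_chain[OF assms(2)] good unfolding good_def by blast
  moreover have "REF E (\<Union>\<C>)" using REF_Union good unfolding good_def by blast
  moreover have "CA E (\<Union>\<C>)" using root CA_iff_rooted_at by blast
  ultimately show ?thesis unfolding good_def by blast
qed

end

theorem mainTheorem9:
  fixes E :: "'v \<Rightarrow> 'v \<Rightarrow> bool" and t :: "'v \<Rightarrow> real" and v :: 'v
  assumes "infinite_biosphere E t"
  shows "\<exists>S. S \<noteq> {} \<and> v \<in> S \<and> good E S \<and> (\<forall>T. S \<subset> T \<longrightarrow> \<not> good E T)"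
proof -
  interpret biosphere E t
    using assms by (rule biosphere_if_infinite_biosphere)
  let ?G = "{S. v \<in> S \<and> good E S}"
  have "\<exists>M\<in>?G. \<forall>X\<in>?G. M \<subseteq> X \<longrightarrow> X = M"
  proof (rule subset_Zorn_nonempty)
    show "?G \<noteq> {}" using good_exists by blast
    fix \<C> assume "\<C> \<noteq> {}" "subset.chain ?G \<C>"
    then have "chain\<^sub>\<subseteq> \<C>" "\<And>S. S \<in> \<C> \<Longrightarrow> v \<in> S \<and> good E S"
      unfolding subset_chain_def chain_subset_def by auto
    then show "\<Union>\<C> \<in> ?G"
      using good_Union_chain[OF \<open>\<C> \<noteq> {}\<close>] \<open>\<C> \<noteq> {}\<close> by blast
  qed
  then show ?thesis by blast
qed

end
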